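(* Let $k\geq 2$ and $i\in[k-1]$ be integers. Let $G$ be a graph which does not contain the configuration $(\dagger^{(1)})^k_2$, and let $f=u_1\dots u_{k-1}$ be a copy of $K_{k-1}$ in $G$ which is a copy of $K_{k-1}$ of two distinct $K_{k+1}$-components $C_1$ and $C_2$. Let $uv$ be an edge of $G$ such that $fu,fv\in C_1$, and let $w$ be a vertex of $G$ such that $fw\in C_2$. Then (i) $\Gamma(u_1,\dots,u_{i-1},u_{i+1},\dots,u_{k-1},w,u,v)$ is an independent set; (ii) $\Gamma(x_1,\dots,x_{i-1},u_{i+1},\dots,u_{k-1},w,u,v)$ is an independent set for any copy $x_1\dots x_{i-1}$ of $K_{i-1}$ in $G$ such that $x_j\in\Gamma(u_{j+1},\dots,u_{k-1},w,u,v)$ for each $j<i$.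
   Context: A $K_{k+1}$-walk in $G$ is a sequence of copies of $K_k$ in which consecutive copies lie in a common copy of $K_{k+1}$; the endpoints are then $K_{k+1}$-connected, and the equivalence classes of copies of $K_k$ are the $K_{k+1}$-components. A copy of $K_{k-1}$ is a copy of $K_{k-1}$ of a component $C$ if it extends to a copy of $K_k$ in $C$. For a clique $f$ and a vertex $x$ adjacent to all of $f$, $fx$ is the clique $f\cup\{x\}$, and $fx\in C$ means this copy of $K_k$ lies in $C$. $\Gamma(x_1,\dots,x_s)$ is the common neighbourhood. $G$ contains the configuration $(\dagger^{(1)})^k_2$ if there are (not necessarily distinct) vertices $u_1,\dots,u_k,v_2,w_{21}$ such that $u_1\dots u_k$ is a copy of $K_k$ in some $K_{k+1}$-component $C$, while $u_1v_2u_3\dots u_k$ and $u_2w_{21}u_3\dots u_k$ are copies of $K_k$ in $G$ not in $C$. *)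

theory Defs
  imports Main
begin

definition graph :: "'a set \<Rightarrow> ('a \<Rightarrow> 'a \<Rightarrow> bool) \<Rightarrow> bool" where
  "graph V E \<longleftrightarrow> finite V \<and> (\<forall>x y. E x y \<longrightarrow> x \<in> V \<and> y \<in> V)
     \<and> (\<forall>x y. E x y \<longrightarrow> E y x) \<and> (\<forall>x. \<not> E x x)"

definition is_clique :: "'a set \<Rightarrow> ('a \<Rightarrow> 'a \<Rightarrow> bool) \<Rightarrow> nat \<Rightarrow> 'a set \<Rightarrow> bool" where
  "is_clique V E k S \<longleftrightarrow> S \<subseteq> V \<and> finite S \<and> card S = k
     \<and> (\<forall>x\<in>S. \<forall>y\<in>S. x \<noteq> y \<longrightarrow> E x y)"

definition kstep :: "'a set \<Rightarrow> ('a \<Rightarrow> 'a \<Rightarrow> bool) \<Rightarrow> nat \<Rightarrow> 'a set \<Rightarrow> 'a set \<Rightarrow> bool" where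
  "kstep V E k S T \<longleftrightarrow> is_clique V E k S \<and> is_clique V E k T
     \<and> (\<exists>Q. is_clique V E (Suc k) Q \<and> S \<subseteq> Q \<and> T \<subseteq> Q)"

definition kconnected :: "'a set \<Rightarrow> ('a \<Rightarrow> 'a \<Rightarrow> bool) \<Rightarrow> nat \<Rightarrow> 'a set \<Rightarrow> 'a set \<Rightarrow> bool" where
  "kconnected V E k S T \<longleftrightarrow> is_clique V E k S \<and> (kstep V E k)\<^sup>*\<^sup>* S T"

definition kcomponent :: "'a set \<Rightarrow> ('a \<Rightarrow> 'a \<Rightarrow> bool) \<Rightarrow> nat \<Rightarrow> 'a set set \<Rightarrow> bool" where
  "kcomponent V E k C \<longleftrightarrow> (\<exists>S. is_clique V E k S \<and> C = {T. kconnected V E k S T})"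

definition clique_of_component ::
  "'a set \<Rightarrow> ('a \<Rightarrow> 'a \<Rightarrow> bool) \<Rightarrow> nat \<Rightarrow> 'a set set \<Rightarrow> 'a set \<Rightarrow> bool" where
  "clique_of_component V E k C f \<longleftrightarrow> is_clique V E (k - 1) f \<and> (\<exists>x. x \<notin> f \<and> insert x f \<in> C)"

definition common_nbhd :: "'a set \<Rightarrow> ('a \<Rightarrow> 'a \<Rightarrow> bool) \<Rightarrow> 'a set \<Rightarrow> 'a set" where
  "common_nbhd V E X = {y \<in> V. \<forall>x\<in>X. E x y}"

definition independent :: "('a \<Rightarrow> 'a \<Rightarrow> bool) \<Rightarrow> 'a set \<Rightarrow> bool" where
  "independent E S \<longleftrightarrow> (\<forall>x\<in>S. \<forall>y\<in>S. \<not> E x y)"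

definition has_dagger :: "'a set \<Rightarrow> ('a \<Rightarrow> 'a \<Rightarrow> bool) \<Rightarrow> nat \<Rightarrow> bool" where
  "has_dagger V E k \<longleftrightarrow> (\<exists>C u v2 w21. kcomponent V E k C
     \<and> is_clique V E k (u ` {1..k}) \<and> u ` {1..k} \<in> C
     \<and> is_clique V E k (insert (u 1) (insert v2 (u ` {3..k})))
     \<and> insert (u 1) (insert v2 (u ` {3..k})) \<notin> C
     \<and> is_clique V E k (insert (u 2) (insert w21 (u ` {3..k})))
     \<and> insert (u 2) (insert w21 (u ` {3..k})) \<notin> C)"

end

theory Submission
  imports Defs
begin

text \<open>Let g be f without its vertex a = u_i. For a common neighbour x of g, w, u, v, the set
  g + x inherits the hypotheses on f: g + x + u and g + x + v lie in C1 because g + u + v + x is a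
  copy of K_{k+1} containing g + u + v, which lies in C1 as a subset of f + u + v; and g + x + w
  lies in C2, for otherwise f + w with the exchanges a -> x and w -> u would be the forbidden
  configuration. Two adjacent common neighbours y, z would then put g + y + z both in C1 (through
  g + y + u + z) and in C2 (through g + y + w + z). For part (ii), exchange u_1, ..., u_{i-1}
  for x_1, ..., x_{i-1} one at a time.\<close>

lemma is_clique_subset:
  assumes "is_clique V E m Q" "T \<subseteq> Q" "card T = j"
  shows "is_clique V E j T"
  using assms finite_subset unfolding is_clique_def by blast

lemma is_clique_insert:
  assumes "is_clique V E m S" "y \<in> V" "y \<notin> S" "\<forall>s\<in>S. E s y \<and> E y s"
  shows "is_clique V E (Suc m) (insert y S)"
  using assms unfolding is_clique_def by auto

lemma is_clique_insertD:
  assumes "is_clique V E k (insert y S)" "is_clique V E (k - 1) S"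
  shows "y \<notin> S" "\<forall>s\<in>S. E s y \<and> E y s"
proof -
  have S: "finite S" "card S = k - 1" using assms(2) unfolding is_clique_def by auto
  show "y \<notin> S"
  proof
    assume "y \<in> S"
    with assms(1) have "card S = k" by (simp add: insert_absorb is_clique_def)
    moreover have "card S \<noteq> 0" using S \<open>y \<in> S\<close> card_0_eq by blast
    ultimately show False using S by linarith
  qed
  moreover have "\<forall>p\<in>insert y S. \<forall>q\<in>insert y S. p \<noteq> q \<longrightarrow> E p q"
    using assms(1) unfolding is_clique_def by blast
  ultimately show "\<forall>s\<in>S. E s y \<and> E y s" by fastforce
qed

lemma is_clique_image_inj_on:
  assumes "is_clique V E n (f ` {1..n})"
  shows "inj_on f {1..n}"
  using assms unfolding is_clique_def by (simp add: inj_on_iff_eq_card)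

lemma symp_kstep: "symp (kstep V E k)"
  unfolding kstep_def by (blast intro: sympI)

lemma kcomponent_clique:
  assumes "kcomponent V E k C" "T \<in> C"
  shows "is_clique V E k T"
proof -
  obtain S where S: "is_clique V E k S" "C = {T. kconnected V E k S T}"
    using assms(1) kcomponent_def by blast
  have "(kstep V E k)\<^sup>*\<^sup>* S T" using assms(2) S kconnected_def by blast
  then show ?thesis
    by (induction rule: rtranclp_induct) (use S in \<open>auto simp: kstep_def\<close>)
qed

lemma kcomponent_step_closed:
  assumes C: "kcomponent V E k C" and "S \<in> C"
    and Q: "is_clique V E (Suc k) Q" "S \<subseteq> Q" "T \<subseteq> Q" and "card T = k"
  shows "T \<in> C"
proof -
  obtain S0 where S0: "is_clique V E k S0" "C = {T. kconnected V E k S0 T}"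
    using C kcomponent_def by blast
  have "kstep V E k S T"
    using kcomponent_clique[OF C \<open>S \<in> C\<close>] is_clique_subset[OF Q(1,3) \<open>card T = k\<close>] Q
    unfolding kstep_def by blast
  moreover have "(kstep V E k)\<^sup>*\<^sup>* S0 S" using \<open>S \<in> C\<close> S0 kconnected_def by blast
  ultimately show ?thesis using S0 unfolding kconnected_def by auto
qed

lemma kcomponents_overlap_eq:
  assumes "kcomponent V E k C1" "kcomponent V E k C2" "T \<in> C1" "T \<in> C2"
  shows "C1 = C2"
proof -
  obtain S1 where S1: "is_clique V E k S1" "C1 = {T. kconnected V E k S1 T}"
    using assms(1) kcomponent_def by blast
  obtain S2 where S2: "is_clique V E k S2" "C2 = {T. kconnected V E k S2 T}"
    using assms(2) kcomponent_def by blast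
  have "(kstep V E k)\<^sup>*\<^sup>* S1 T" "(kstep V E k)\<^sup>*\<^sup>* S2 T"
    using assms S1 S2 by (auto simp: kconnected_def)
  then have "(kstep V E k)\<^sup>*\<^sup>* S1 X \<longleftrightarrow> (kstep V E k)\<^sup>*\<^sup>* S2 X" for X
    using sympD[OF symp_rtranclp[OF symp_kstep]] by (meson rtranclp_trans)
  then show ?thesis using S1 S2 unfolding kconnected_def by auto
qed

text \<open>In the notation of the configuration, K = u_1 ... u_k with u_1 = b and u_2 = a,
  and a', b' play the roles of v_2 and w_21.\<close>

lemma has_daggerI:
  assumes C: "kcomponent V E k C" and "K \<in> C"
    and ab: "a \<in> K" "b \<in> K" "a \<noteq> b"
    and "is_clique V E k (insert a' (K - {a}))" "insert a' (K - {a}) \<notin> C"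
    and "is_clique V E k (insert b' (K - {b}))" "insert b' (K - {b}) \<notin> C"
  shows "has_dagger V E k"
proof -
  have K: "is_clique V E k K" using kcomponent_clique C \<open>K \<in> C\<close> by blast
  then have fin: "finite K" and card: "card K = k" unfolding is_clique_def by auto
  have "card (K - {a, b}) = card {3..k}" using fin card ab by (simp add: card_Diff_subset)
  then obtain h where h: "bij_betw h {3..k} (K - {a, b})"
    by (metis fin finite_Diff finite_atLeastAtMost finite_same_card_bij)
  define us where "us n = (if n = 1 then b else if n = 2 then a else h n)" for n
  have rest: "us ` {3..k} = K - {a, b}"
  proof -
    have "us ` {3..k} = h ` {3..k}" unfolding us_def by (intro image_cong) auto
    then show ?thesis using h bij_betw_imp_surj_on by metis
  qed
  have "2 \<le> k" using card ab fin
    by (metis card_2_iff card_mono empty_subsetI insert_subset)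
  then have "{1..k} = insert 1 (insert 2 {3..k})" by auto
  then have "us ` {1..k} = insert (us 1) (insert (us 2) (us ` {3..k}))" by simp
  also have "\<dots> = K" using rest ab by (auto simp: us_def)
  finally have all: "us ` {1..k} = K" .
  have "insert (us 1) (insert a' (us ` {3..k})) = insert a' (K - {a})"
    and "insert (us 2) (insert b' (us ` {3..k})) = insert b' (K - {b})"
    using rest ab by (auto simp: us_def)
  with assms K all show ?thesis
    unfolding has_dagger_def by (intro exI[of _ C] exI[of _ us] exI[of _ a'] exI[of _ b']) simp
qed

locale dagger_free_component_pair =
  fixes V :: "'a set" and E :: "'a \<Rightarrow> 'a \<Rightarrow> bool" and k :: nat
    and C1 C2 :: "'a set set" and u v w :: 'a
  assumes graph: "graph V E"
    and no_dagger: "\<not> has_dagger V E k"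
    and C1: "kcomponent V E k C1" and C2: "kcomponent V E k C2"
    and components_distinct: "C1 \<noteq> C2"
    and edge_uv: "E u v"
begin

lemma adj_sym: "E p q \<Longrightarrow> E q p"
  and adj_irrefl: "\<not> E p p"
  and adj_in_V: "E p q \<Longrightarrow> p \<in> V"
  using graph unfolding graph_def by simp_all

text \<open>The hypotheses on f in the statement, for an arbitrary set g in place of f.\<close>

definition anchored :: "'a set \<Rightarrow> bool" where
  "anchored g \<longleftrightarrow> is_clique V E (k - 1) g
     \<and> insert u g \<in> C1 \<and> insert v g \<in> C1 \<and> insert w g \<in> C2"

lemma anchored_exchange:
  assumes g: "anchored g" and a: "a \<in> g"
    and x: "x \<in> common_nbhd V E (g - {a} \<union> {w, u, v})"
  shows "anchored (insert x (g - {a}))"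
proof -
  define h where "h = g - {a}"
  have gc: "is_clique V E (k - 1) g" and gu: "insert u g \<in> C1"
    and gv: "insert v g \<in> C1" and gw: "insert w g \<in> C2"
    using g unfolding anchored_def by auto
  have fin: "finite g" "card g = k - 1" using gc unfolding is_clique_def by auto
  have "card g \<noteq> 0" using fin(1) a card_0_eq by blast
  then have k: "2 \<le> k" using fin(2) by linarith
  have h: "finite h" "card h = k - 2" "h \<subseteq> g"
    using fin a unfolding h_def by auto
  have u: "u \<notin> g" "\<forall>s\<in>g. E s u \<and> E u s"
    using is_clique_insertD[OF kcomponent_clique[OF C1 gu] gc] by blast+
  have v: "v \<notin> g" "\<forall>s\<in>g. E s v \<and> E v s"
    using is_clique_insertD[OF kcomponent_clique[OF C1 gv] gc] by blast+
  have w: "w \<notin> g" "\<forall>s\<in>g. E s w \<and> E w s"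
    using is_clique_insertD[OF kcomponent_clique[OF C2 gw] gc] by blast+
  have "x \<in> V" "\<forall>s\<in>h \<union> {w, u, v}. E s x"
    using x unfolding common_nbhd_def h_def by auto
  then have x_adj: "x \<in> V" "\<forall>s\<in>h \<union> {w, u, v}. E s x \<and> E x s"
    using adj_sym by auto
  then have x_new: "x \<notin> h" "x \<noteq> u" "x \<noteq> v" "x \<noteq> w"
    using adj_irrefl by blast+
  have "u \<noteq> v" using edge_uv adj_irrefl by blast
  have uvh: "u \<notin> h" "v \<notin> h" "w \<notin> h" using u v w h by blast+
  have "is_clique V E (Suc k) (insert v (insert u g))"
    by (rule is_clique_insert[OF kcomponent_clique[OF C1 gu]])
      (use u v \<open>u \<noteq> v\<close> edge_uv adj_sym adj_in_V in blast)+
  then have huv: "insert u (insert v h) \<in> C1"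
    by (rule kcomponent_step_closed[OF C1 gu]) (use h uvh \<open>u \<noteq> v\<close> k in auto)
  have huvx: "is_clique V E (Suc k) (insert x (insert u (insert v h)))"
    by (rule is_clique_insert[OF kcomponent_clique[OF C1 huv]]) (use x_adj x_new in auto)
  have hxu: "insert u (insert x h) \<in> C1" and hxv: "insert v (insert x h) \<in> C1"
    by (rule kcomponent_step_closed[OF C1 huv huvx]; use h uvh x_new k in auto)+
  have hx: "is_clique V E (k - 1) (insert x h)"
    by (rule is_clique_subset[OF huvx]) (use h x_new k in auto)
  have hxw: "insert w (insert x h) \<in> C2"
  proof (rule ccontr)
    assume hxw_out: "insert w (insert x h) \<notin> C2"
    have "is_clique V E (Suc (k - 1)) (insert w (insert x h))"
      by (rule is_clique_insert[OF hx]) (use x_adj x_new w h uvh adj_in_V in blast)+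
    moreover have "insert x (insert w g - {a}) = insert w (insert x h)"
      and "insert u (insert w g - {w}) = insert u g"
      using a w(1) unfolding h_def by auto
    moreover have "insert u g \<notin> C2"
      using kcomponents_overlap_eq[OF C1 C2 gu] components_distinct by blast
    moreover have "a \<noteq> w" using a w(1) by blast
    ultimately have "has_dagger V E k"
      using has_daggerI[OF C2 gw, of a w x u] a k hxw_out kcomponent_clique[OF C1 gu] by simp
    with no_dagger show False ..
  qed
  show ?thesis using hx hxu hxv hxw unfolding anchored_def h_def by blast
qed

lemma anchored_common_nbhd_independent:
  assumes g: "anchored g" and a: "a \<in> g"
  shows "independent E (common_nbhd V E (g - {a} \<union> {w, u, v}))"
  unfolding independent_def
proof (intro ballI notI)
  fix y z
  assume y: "y \<in> common_nbhd V E (g - {a} \<union> {w, u, v})"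
    and z: "z \<in> common_nbhd V E (g - {a} \<union> {w, u, v})" and yz: "E y z"
  define h where "h = g - {a}"
  have "anchored (insert y h)" using anchored_exchange[OF g a y] unfolding h_def .
  then have hy: "is_clique V E (k - 1) (insert y h)"
    and hyu: "insert u (insert y h) \<in> C1" and hyw: "insert w (insert y h) \<in> C2"
    unfolding anchored_def by auto
  have "z \<in> V" "\<forall>s\<in>insert y (h \<union> {w, u}). E s z"
    using z yz unfolding common_nbhd_def h_def by auto
  then have z_adj: "z \<in> V" "\<forall>s\<in>insert y (h \<union> {w, u}). E s z \<and> E z s"
    using adj_sym by auto
  then have z_new: "z \<notin> insert y (h \<union> {w, u})" using adj_irrefl by blast
  have "card (insert z (insert y h)) = k"
  proof -
    have "finite (insert y h)" "card (insert y h) = k - 1" "insert y h \<noteq> {}"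
      using hy unfolding is_clique_def by auto
    then show ?thesis using z_new card_0_eq[of "insert y h"] by simp
  qed
  moreover have "is_clique V E (Suc k) (insert z (insert w (insert y h)))"
    by (rule is_clique_insert[OF kcomponent_clique[OF C2 hyw]]) (use z_adj z_new in auto)
  moreover have "is_clique V E (Suc k) (insert z (insert u (insert y h)))"
    by (rule is_clique_insert[OF kcomponent_clique[OF C1 hyu]]) (use z_adj z_new in auto)
  ultimately have "insert z (insert y h) \<in> C2" "insert z (insert y h) \<in> C1"
    by (auto intro: kcomponent_step_closed[OF C2 hyw] kcomponent_step_closed[OF C1 hyu])
  then show False using kcomponents_overlap_eq[OF C1 C2] components_distinct by blast
qed

lemma prefix_replaced_diff_next:
  assumes inj: "inj_on uf {1..k-1}" and "j < k - 1"
    and x: "\<forall>l\<in>{1..j}. x l \<in> common_nbhd V E (uf ` {l+1..k-1} \<union> X)"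
  shows "(x ` {1..j} \<union> uf ` {j+1..k-1}) - {uf (j+1)} = x ` {1..j} \<union> uf ` {j+2..k-1}"
proof -
  have "uf (j+1) \<notin> x ` {1..j}"
  proof
    assume "uf (j+1) \<in> x ` {1..j}"
    then obtain l where l: "l \<in> {1..j}" "x l = uf (j+1)" by (metis imageE)
    have "x l \<in> common_nbhd V E (uf ` {l+1..k-1} \<union> X)" using x l(1) by blast
    moreover have "uf (j+1) \<in> uf ` {l+1..k-1}" using l(1) \<open>j < k - 1\<close> by auto
    ultimately have "E (uf (j+1)) (x l)" unfolding common_nbhd_def by blast
    with l(2) adj_irrefl show False by simp
  qed
  moreover have "uf (j+1) \<notin> uf ` {j+2..k-1}"
    using inj_on_image_mem_iff[OF inj, of "j+1" "{j+2..k-1}"] \<open>j < k - 1\<close> by auto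
  moreover have "{j+1..k-1} = insert (j+1) {j+2..k-1}" using \<open>j < k - 1\<close> by auto
  ultimately show ?thesis by auto
qed

lemma anchored_replace_prefix:
  assumes f: "anchored (uf ` {1..k-1})" and "m < k"
    and x_clique: "is_clique V E m (x ` {1..m})"
    and x: "\<forall>j\<in>{1..m}. x j \<in> common_nbhd V E (uf ` {j+1..k-1} \<union> {w, u, v})"
  shows "anchored (x ` {1..m} \<union> uf ` {m+1..k-1})"
proof -
  have inj_uf: "inj_on uf {1..k-1}"
    using f is_clique_image_inj_on unfolding anchored_def by blast
  have inj_x: "inj_on x {1..m}" using x_clique by (rule is_clique_image_inj_on)
  have "anchored (x ` {1..j} \<union> uf ` {j+1..k-1})" if "j \<le> m" for j
    using that
  proof (induction j)
    case 0
    with f show ?case by simp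
  next
    case (Suc j)
    let ?g = "x ` {1..j} \<union> uf ` {j+1..k-1}"
    have "j < k - 1" using Suc.prems \<open>m < k\<close> by linarith
    then have a: "uf (j+1) \<in> ?g" by simp
    have "\<forall>l\<in>{1..j}. x l \<in> common_nbhd V E (uf ` {l+1..k-1} \<union> {w, u, v})"
      using x Suc.prems by auto
    from prefix_replaced_diff_next[OF inj_uf \<open>j < k - 1\<close> this]
    have diff: "?g - {uf (j+1)} = x ` {1..j} \<union> uf ` {Suc j+1..k-1}" by simp
    have "E y (x (Suc j))" if "y \<in> x ` {1..j}" for y
    proof -
      obtain l where l: "l \<in> {1..j}" "y = x l" using \<open>y \<in> x ` {1..j}\<close> by blast
      then have "x l \<noteq> x (Suc j)"
        using inj_on_eq_iff[OF inj_x, of l "Suc j"] Suc.prems by auto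
      then show ?thesis using x_clique l Suc.prems unfolding is_clique_def by auto
    qed
    moreover have "x (Suc j) \<in> common_nbhd V E (uf ` {Suc j+1..k-1} \<union> {w, u, v})"
      using x Suc.prems by auto
    ultimately have "x (Suc j) \<in> common_nbhd V E (?g - {uf (j+1)} \<union> {w, u, v})"
      unfolding diff common_nbhd_def by auto
    from anchored_exchange[OF Suc.IH[OF Suc_leD[OF Suc.prems]] a this]
    show ?case using diff by (simp add: atLeastAtMostSuc_conv Un_insert_left)
  qed
  then show ?thesis by blast
qed

end

theorem lemma5p3:
  fixes V :: "'a set" and E :: "'a \<Rightarrow> 'a \<Rightarrow> bool" and k i :: nat
    and uf :: "nat \<Rightarrow> 'a" and C1 C2 :: "'a set set" and u v w :: 'a
  assumes "graph V E"
    and "k \<ge> 2" and "1 \<le> i" and "i \<le> k - 1"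
    and "\<not> has_dagger V E k"
    and "is_clique V E (k - 1) (uf ` {1..k-1})"
    and "kcomponent V E k C1" and "kcomponent V E k C2" and "C1 \<noteq> C2"
    and "clique_of_component V E k C1 (uf ` {1..k-1})"
    and "clique_of_component V E k C2 (uf ` {1..k-1})"
    and "E u v"
    and "insert u (uf ` {1..k-1}) \<in> C1" and "insert v (uf ` {1..k-1}) \<in> C1"
    and "insert w (uf ` {1..k-1}) \<in> C2"
  shows "independent E (common_nbhd V E
            (uf ` ({1..k-1} - {i}) \<union> {w, u, v}))
       \<and> (\<forall>x :: nat \<Rightarrow> 'a.
            is_clique V E (i - 1) (x ` {1..i-1})
            \<and> (\<forall>j\<in>{1..i-1}. x j \<in> common_nbhd V E (uf ` {j+1..k-1} \<union> {w, u, v}))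
            \<longrightarrow> independent E (common_nbhd V E
                  (x ` {1..i-1} \<union> uf ` {i+1..k-1} \<union> {w, u, v})))"
  \<comment> \<open>Unused: k \<ge> 2 follows from 1 \<le> i \<le> k - 1, and clique_of_component from the
    memberships of f + u and f + w.\<close>
proof -
  interpret dagger_free_component_pair V E k C1 C2 u v w
    by unfold_locales (rule assms)+
  have f: "anchored (uf ` {1..k-1})" using assms(6,13-15) unfolding anchored_def by blast
  have inj: "inj_on uf {1..k-1}" using assms(6) by (rule is_clique_image_inj_on)
  have "uf ` ({1..k-1} - {i}) = uf ` {1..k-1} - {uf i}"
    using inj assms(3,4) by (simp add: inj_on_image_set_diff)
  then have part_i: "independent E (common_nbhd V E (uf ` ({1..k-1} - {i}) \<union> {w, u, v}))"
    using anchored_common_nbhd_independent[OF f, of "uf i"] assms(3,4) by simp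
  have part_ii: "independent E (common_nbhd V E (x ` {1..i-1} \<union> uf ` {i+1..k-1} \<union> {w, u, v}))"
    if x_clique: "is_clique V E (i - 1) (x ` {1..i-1})"
      and x: "\<forall>j\<in>{1..i-1}. x j \<in> common_nbhd V E (uf ` {j+1..k-1} \<union> {w, u, v})" for x
  proof -
    have m: "i - 1 < k" "i - 1 < k - 1" and i: "i - 1 + 1 = i" "i - 1 + 2 = i + 1"
      using assms(3,4) by auto
    have g: "anchored (x ` {1..i-1} \<union> uf ` {i..k-1})"
      using anchored_replace_prefix[OF f m(1) x_clique x] by (simp only: i)
    have a: "uf i \<in> x ` {1..i-1} \<union> uf ` {i..k-1}" using assms(4) by simp
    have diff: "(x ` {1..i-1} \<union> uf ` {i..k-1}) - {uf i} = x ` {1..i-1} \<union> uf ` {i+1..k-1}"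
      using prefix_replaced_diff_next[OF inj m(2) x] by (simp only: i)
    show ?thesis using anchored_common_nbhd_independent[OF g a] by (simp only: diff)
  qed
  show ?thesis using part_i part_ii by simp
qed

end
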